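(* Let $(\lambda_n)_{n\ge1}$ be real numbers with $\lambda_n\in(0,1)$ for all $n$, such that $\sum_{n=1}^\infty\lambda_n=\infty$ and $$\sum_{j=1}^n\frac{\prod_{k=1}^n(1-\lambda_k)}{1-\lambda_j}\to0\quad\text{as }n\to\infty.$$ Let $(a_n)_{n\ge1}$ be a nonnegative sequence satisfying $a_n\le(1-\lambda_n)a_{n-1}+\prod_{k=1}^n(1-\lambda_k)$ for all $n\ge2$. Then $\lim_{n\to\infty}a_n=0$. *)

theory Defs
  imports "HOL-Analysis.Analysis"
begin

end

theory Submission
  imports Defs
begin

text \<open>Write \<open>P n = (\<Prod>k=1..n. 1 - lam k)\<close>. Dividing the recurrence by \<open>P n\<close> shows that
  \<open>a n / P n\<close> grows by at most 1 per step, so \<open>a n \<le> P n * (C + n)\<close>. Every summand of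
  \<open>\<Sum>j=1..n. P n / (1 - lam j)\<close> is at least \<open>P n\<close>, so the hypothesis on these sums forces
  \<open>n * P n\<close> to tend to 0, and hence so does \<open>a n\<close>.\<close>

lemma recurrence_le_prod_times_linear:
  fixes q a :: "nat \<Rightarrow> real"
  assumes q_pos: "\<And>n. n \<ge> 1 \<Longrightarrow> 0 < q n"
    and rec: "\<And>n. n \<ge> 2 \<Longrightarrow> a n \<le> q n * a (n - 1) + (\<Prod>k=1..n. q k)"
    and "n \<ge> 1"
  shows "a n \<le> (\<Prod>k=1..n. q k) * (a 1 / q 1 + real n - 1)"
  using \<open>n \<ge> 1\<close>
proof (induction n rule: dec_induct)
  case base
  then show ?case using q_pos[of 1] by simp
next
  case (step m)
  have "a (Suc m) \<le> q (Suc m) * a m + (\<Prod>k=1..Suc m. q k)"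
    using rec[of "Suc m"] step.hyps by simp
  also have "\<dots> \<le> q (Suc m) * ((\<Prod>k=1..m. q k) * (a 1 / q 1 + real m - 1)) + (\<Prod>k=1..Suc m. q k)"
    using step.IH q_pos[of "Suc m"] by (intro add_right_mono mult_left_mono) auto
  also have "\<dots> = (\<Prod>k=1..Suc m. q k) * (a 1 / q 1 + real (Suc m) - 1)"
    by (simp add: atLeastAtMostSuc_conv algebra_simps)
  finally show ?case .
qed

lemma card_mult_le_sum_divide:
  fixes x :: real and d :: "'a \<Rightarrow> real"
  assumes "0 \<le> x" and "\<And>j. j \<in> A \<Longrightarrow> 0 < d j \<and> d j \<le> 1"
  shows "real (card A) * x \<le> (\<Sum>j\<in>A. x / d j)"
proof -
  have "real (card A) * x = (\<Sum>j\<in>A. x)" by simp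
  also have "\<dots> \<le> (\<Sum>j\<in>A. x / d j)"
    using assms by (intro sum_mono) (simp add: le_divide_eq mult_left_le)
  finally show ?thesis .
qed

lemma LIMSEQ_zero_if_real_mult_LIMSEQ_zero:
  fixes x :: "nat \<Rightarrow> real"
  assumes "(\<lambda>n. real n * x n) \<longlonglongrightarrow> 0"
  shows "x \<longlonglongrightarrow> 0"
proof -
  have "(\<lambda>n. inverse (real n) * (real n * x n)) \<longlonglongrightarrow> 0 * 0"
    using lim_inverse_n assms by (rule tendsto_mult)
  moreover have "\<forall>\<^sub>F n in sequentially. inverse (real n) * (real n * x n) = x n"
    using eventually_gt_at_top[of 0] by eventually_elim simp
  ultimately show ?thesis
    by (simp add: Lim_transform_eventually)
qed

lemma real_mult_LIMSEQ_zero_if_sum_divide_LIMSEQ_zero: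
  fixes P d :: "nat \<Rightarrow> real"
  assumes P_nonneg: "\<And>n. 0 \<le> P n"
    and d_range: "\<And>j. j \<ge> 1 \<Longrightarrow> 0 < d j \<and> d j \<le> 1"
    and sum_lim: "(\<lambda>n. \<Sum>j=1..n. P n / d j) \<longlonglongrightarrow> 0"
  shows "(\<lambda>n. real n * P n) \<longlonglongrightarrow> 0"
proof (rule tendsto_sandwich[OF _ _ tendsto_const sum_lim])
  show "\<forall>\<^sub>F n in sequentially. 0 \<le> real n * P n"
    using P_nonneg by simp
  show "\<forall>\<^sub>F n in sequentially. real n * P n \<le> (\<Sum>j=1..n. P n / d j)"
  proof (intro always_eventually allI)
    fix n
    have "real (card {1..n}) * P n \<le> (\<Sum>j=1..n. P n / d j)"
      using P_nonneg d_range by (intro card_mult_le_sum_divide) auto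
    then show "real n * P n \<le> (\<Sum>j=1..n. P n / d j)"
      by simp
  qed
qed

theorem lemma3p1:
  fixes lam a :: "nat \<Rightarrow> real"
  assumes lam_range: "\<And>n. n \<ge> 1 \<Longrightarrow> 0 < lam n \<and> lam n < 1"
    and lam_div: "\<not> summable (\<lambda>n. lam (Suc n))"
    and lam_lim: "(\<lambda>n. \<Sum>j=1..n. (\<Prod>k=1..n. (1 - lam k)) / (1 - lam j)) \<longlonglongrightarrow> 0"
    and a_nonneg: "\<And>n. n \<ge> 1 \<Longrightarrow> a n \<ge> 0"
    and a_rec: "\<And>n. n \<ge> 2 \<Longrightarrow> a n \<le> (1 - lam n) * a (n - 1) + (\<Prod>k=1..n. (1 - lam k))"
  shows "a \<longlonglongrightarrow> 0"
proof -
  define P where "P n = (\<Prod>k=1..n. (1 - lam k))" for n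
  define c where "c = a 1 / (1 - lam 1)"
  have one_minus_lam: "0 < 1 - lam n \<and> 1 - lam n \<le> 1" if "n \<ge> 1" for n
    using lam_range[OF that] by auto
  have P_nonneg: "0 \<le> P n" for n
    unfolding P_def using one_minus_lam by (intro prod_nonneg) (simp add: less_imp_le)
  have n_P_lim: "(\<lambda>n. real n * P n) \<longlonglongrightarrow> 0"
    using P_nonneg one_minus_lam lam_lim[folded P_def]
    by (rule real_mult_LIMSEQ_zero_if_sum_divide_LIMSEQ_zero)
  have bound_lim: "(\<lambda>n. (c - 1) * P n + real n * P n) \<longlonglongrightarrow> 0"
    using tendsto_mult_right_zero[OF LIMSEQ_zero_if_real_mult_LIMSEQ_zero[OF n_P_lim]] n_P_lim
    by (rule tendsto_add_zero)
  have bound: "a n \<le> (c - 1) * P n + real n * P n" if "n \<ge> 1" for n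
  proof -
    have "a n \<le> P n * (c + real n - 1)"
      unfolding P_def c_def using one_minus_lam
      by (intro recurrence_le_prod_times_linear[OF _ a_rec that]) simp
    then show ?thesis by (simp add: algebra_simps)
  qed
  show ?thesis
  proof (rule tendsto_sandwich[OF _ _ tendsto_const bound_lim])
    show "\<forall>\<^sub>F n in sequentially. 0 \<le> a n"
      using eventually_ge_at_top[of 1] by (rule eventually_mono) (rule a_nonneg)
    show "\<forall>\<^sub>F n in sequentially. a n \<le> (c - 1) * P n + real n * P n"
      using eventually_ge_at_top[of 1] by (rule eventually_mono) (rule bound)
  qed
qed

end
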